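(* Let $G$ be a compact Lie group acting continuously on a metrizable space $X$. Then $$\max_{K\lhd G}\ \mathrm{cat}\big((X/K)^{G/K}\big)\ \le\ \mathrm{cat}_G(X),$$ where the maximum is over all closed normal subgroups $K$ of $G$ (not necessarily acting freely), $G/K$ acts on $X/K$ by $(gK)\cdot[x]_K=[gx]_K$, and $(X/K)^{G/K}$ denotes its fixed point set.
   Context: $\mathrm{cat}(Y)$ is the least $k$ such that $Y$ is covered by $k$ open sets each of whose inclusions into $Y$ is null-homotopic. For a $\Gamma$-space $Z$, $\mathrm{cat}_\Gamma(Z)$ is the least $k$ such that $Z$ is covered by $k$ $\Gamma$-invariant open sets $U_j$ such that each inclusion $U_j\hookrightarrow Z$ is $\Gamma$-homotopic to a $\Gamma$-map $c\colon U_j\to Z$ with $c(U_j)$ contained in a single $\Gamma$-orbit. *)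

theory Defs
  imports "HOL-Analysis.Analysis" "HOL-Algebra.Group_Action"
begin

definition topological_group :: "('g, 'b) monoid_scheme \<Rightarrow> 'g topology \<Rightarrow> bool" where
  "topological_group G TG \<longleftrightarrow>
     group G \<and> topspace TG = carrier G \<and> Hausdorff_space TG \<and>
     continuous_map (prod_topology TG TG) TG (\<lambda>(a, b). a \<otimes>\<^bsub>G\<^esub> b) \<and>
     continuous_map TG TG (\<lambda>a. inv\<^bsub>G\<^esub> a)"

definition locally_euclidean :: "'a topology \<Rightarrow> bool" where
  "locally_euclidean T \<longleftrightarrow>
     (\<exists>n. \<forall>a\<in>topspace T. \<exists>U V. openin T U \<and> a \<in> U \<and> openin (Euclidean_space n) V \<and>
          subtopology T U homeomorphic_space subtopology (Euclidean_space n) V)"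

text \<open>A compact Lie group, rendered as a compact Hausdorff topological group that is a
  (topological) manifold; by Gleason--Montgomery--Zippin this is the same as a compact Lie group.\<close>
definition compact_Lie_group :: "('g, 'b) monoid_scheme \<Rightarrow> 'g topology \<Rightarrow> bool" where
  "compact_Lie_group G TG \<longleftrightarrow>
     topological_group G TG \<and> compact_space TG \<and> locally_euclidean TG"

definition continuous_action ::
  "('g, 'b) monoid_scheme \<Rightarrow> 'g topology \<Rightarrow> 'x topology \<Rightarrow> ('g \<Rightarrow> 'x \<Rightarrow> 'x) \<Rightarrow> bool" where
  "continuous_action G TG X \<phi> \<longleftrightarrow>
     topological_group G TG \<and> group_action G (topspace X) \<phi> \<and>
     continuous_map (prod_topology TG X) X (\<lambda>(g, x). \<phi> g x)"

definition orbit_space_topology ::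
  "('g, 'b) monoid_scheme \<Rightarrow> 'x topology \<Rightarrow> ('g \<Rightarrow> 'x \<Rightarrow> 'x) \<Rightarrow> 'x set topology" where
  "orbit_space_topology K X \<phi> =
     topology (\<lambda>\<U>. \<U> \<subseteq> orbits K (topspace X) \<phi> \<and> openin X (\<Union>\<U>))"

text \<open>Fixed point set of the induced G/K action on X/K:
  orbits Q = [x]_K with [g x]_K = [x]_K for all g in G.\<close>
definition quotient_fixed_points ::
  "('g, 'b) monoid_scheme \<Rightarrow> 'g set \<Rightarrow> 'x topology \<Rightarrow> ('g \<Rightarrow> 'x \<Rightarrow> 'x) \<Rightarrow> 'x set set" where
  "quotient_fixed_points G K X \<phi> =
     {Q \<in> orbits (G\<lparr>carrier := K\<rparr>) (topspace X) \<phi>.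
        \<forall>g\<in>carrier G. \<forall>x\<in>Q. orbit (G\<lparr>carrier := K\<rparr>) \<phi> (\<phi> g x) = Q}"

definition fixed_point_space ::
  "('g, 'b) monoid_scheme \<Rightarrow> 'g set \<Rightarrow> 'x topology \<Rightarrow> ('g \<Rightarrow> 'x \<Rightarrow> 'x) \<Rightarrow> 'x set topology" where
  "fixed_point_space G K X \<phi> =
     subtopology (orbit_space_topology (G\<lparr>carrier := K\<rparr>) X \<phi>) (quotient_fixed_points G K X \<phi>)"

section \<open>Lusternik--Schnirelmann category (non-normalized) and its equivariant version\<close>

definition LS_cat :: "'a topology \<Rightarrow> enat" where
  "LS_cat Y = Inf {enat k | k. \<exists>U :: nat \<Rightarrow> 'a set.
      (\<forall>i<k. openin Y (U i) \<and>
         (\<exists>c. homotopic_with (\<lambda>_. True) (subtopology Y (U i)) Y id (\<lambda>_. c))) \<and>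
      topspace Y \<subseteq> (\<Union>i<k. U i)}"

definition equivariant_cat ::
  "('g, 'b) monoid_scheme \<Rightarrow> 'x topology \<Rightarrow> ('g \<Rightarrow> 'x \<Rightarrow> 'x) \<Rightarrow> enat" where
  "equivariant_cat G Z \<phi> = Inf {enat k | k. \<exists>U :: nat \<Rightarrow> 'x set.
      (\<forall>i<k. openin Z (U i) \<and> (\<forall>g\<in>carrier G. \<forall>x\<in>U i. \<phi> g x \<in> U i) \<and>
         (\<exists>c. homotopic_with
                 (\<lambda>h. \<forall>g\<in>carrier G. \<forall>x\<in>U i. h (\<phi> g x) = \<phi> g (h x))
                 (subtopology Z (U i)) Z id c \<and>
              (\<exists>z\<in>topspace Z. c ` (U i) \<subseteq> orbit G \<phi> z))) \<and>
      topspace Z \<subseteq> (\<Union>i<k. U i)}"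

end

theory Submission
  imports Defs
begin

text \<open>Let \<open>U\<close> be a \<open>G\<close>-invariant open set whose inclusion is \<open>G\<close>-homotopic to a map
  \<open>c\<close> into an orbit \<open>G z\<close>. A \<open>G\<close>-equivariant homotopy maps \<open>K\<close>-orbits to \<open>K\<close>-orbits,
  so it descends to a homotopy on \<open>X/K\<close>, which is continuous because the orbit map
  \<open>X \<rightarrow> X/K\<close> is open. The descended homotopy keeps the \<open>G\<close>-fixed \<open>K\<close>-orbits
  fixed, and it ends in the single point \<open>K z\<close>, since every fixed \<open>K\<close>-orbit meeting \<open>G z\<close> is \<open>K z\<close>. Hence a \<open>G\<close>-categorical
  cover of \<open>X\<close> induces a categorical cover of the fixed points of \<open>G/K\<close> in \<open>X/K\<close>.\<close>

lemma open_map_prod_map: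
  assumes f: "open_map X X' f" and g: "open_map Y Y' g"
  shows "open_map (prod_topology X Y) (prod_topology X' Y') (\<lambda>(x, y). (f x, g y))"
  unfolding open_map_def
proof (intro allI impI)
  fix W assume "openin (prod_topology X Y) W"
  then have W: "\<And>x y. (x, y) \<in> W \<Longrightarrow>
      \<exists>U V. openin X U \<and> openin Y V \<and> x \<in> U \<and> y \<in> V \<and> U \<times> V \<subseteq> W"
    using openin_prod_topology_alt by metis
  have "\<exists>U' V'. openin X' U' \<and> openin Y' V' \<and> x' \<in> U' \<and> y' \<in> V' \<and>
          U' \<times> V' \<subseteq> (\<lambda>(x, y). (f x, g y)) ` W"
    if image: "(x', y') \<in> (\<lambda>(x, y). (f x, g y)) ` W" for x' y'
  proof -
    obtain x y where "(x, y) \<in> W" "x' = f x" "y' = g y"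
      using image by auto
    moreover obtain U V where "openin X U" "openin Y V" "x \<in> U" "y \<in> V" "U \<times> V \<subseteq> W"
      using W[OF calculation(1)] by blast
    moreover have "f ` U \<times> g ` V \<subseteq> (\<lambda>(x, y). (f x, g y)) ` W"
      using \<open>U \<times> V \<subseteq> W\<close> by fast
    moreover have "openin X' (f ` U)" "openin Y' (g ` V)"
      using f g \<open>openin X U\<close> \<open>openin Y V\<close> unfolding open_map_def by blast+
    ultimately show ?thesis
      by blast
  qed
  then show "openin (prod_topology X' Y') ((\<lambda>(x, y). (f x, g y)) ` W)"
    unfolding openin_prod_topology_alt by blast
qed

lemma (in group_action) subgroup_action:
  assumes "subgroup H G"
  shows "group_action (G\<lparr>carrier := H\<rparr>) E \<phi>"
proof -
  interpret hom: group_hom G "BijGroup E" \<phi> by (rule group_hom)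
  have "\<phi> \<in> hom (G\<lparr>carrier := H\<rparr>) (BijGroup E)"
    using subgroup.subset[OF assms] by (auto simp: hom_def subsetD)
  then show ?thesis
    unfolding group_action_def group_hom_def group_hom_axioms_def
    using subgroup.subgroup_is_group[OF assms hom.G.is_group] hom.H.is_group by blast
qed

lemma (in group_action) orbit_eq:
  assumes "x \<in> E" and "y \<in> orbit G \<phi> x"
  shows "orbit G \<phi> y = orbit G \<phi> x"
proof -
  have "y \<in> E" using assms orbits_coverture unfolding orbits_def by blast
  then have "y \<in> orbit G \<phi> y \<inter> orbit G \<phi> x" using orbit_refl assms(2) by blast
  moreover have "orbit G \<phi> y \<in> orbits G E \<phi>" "orbit G \<phi> x \<in> orbits G E \<phi>"
    using \<open>y \<in> E\<close> assms(1) unfolding orbits_def by blast+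
  ultimately show ?thesis using disjoint_union by blast
qed

locale topological_action = group_action G "topspace X" \<phi>
  for G :: "('g, 'b) monoid_scheme" (structure) and X :: "'x topology" and \<phi> +
  assumes continuous_map_action: "g \<in> carrier G \<Longrightarrow> continuous_map X X (\<phi> g)"

sublocale topological_action \<subseteq> group G
  using group_hom group_hom.axioms(1) by blast

context topological_action
begin

abbreviation orbit_space :: "'x set topology" where
  "orbit_space \<equiv> orbit_space_topology G X \<phi>"

lemma orbit_subset_topspace: "x \<in> topspace X \<Longrightarrow> orbit G \<phi> x \<subseteq> topspace X"
  using orbits_coverture unfolding orbits_def by blast

lemma Union_Int_orbits:
  assumes "S \<subseteq> orbits G (topspace X) \<phi>" and "T \<subseteq> orbits G (topspace X) \<phi>"
  shows "\<Union>(S \<inter> T) = \<Union>S \<inter> \<Union>T"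
proof (intro equalityI subsetI)
  fix x assume "x \<in> \<Union>S \<inter> \<Union>T"
  then obtain A B where "A \<in> S" "B \<in> T" "x \<in> A" "x \<in> B" by blast
  moreover have "A = B"
    using disjoint_union[of A B] assms calculation by blast
  ultimately show "x \<in> \<Union>(S \<inter> T)" by blast
qed blast

lemma openin_orbit_space:
  "openin orbit_space W \<longleftrightarrow> W \<subseteq> orbits G (topspace X) \<phi> \<and> openin X (\<Union>W)"
proof -
  let ?open = "\<lambda>W. W \<subseteq> orbits G (topspace X) \<phi> \<and> openin X (\<Union>W)"
  have "?open (S \<inter> T)" if "?open S" and "?open T" for S T
    using that by (metis Union_Int_orbits le_infI1 openin_Int)
  moreover have "?open (\<Union>\<W>)" if "\<forall>W\<in>\<W>. ?open W" for \<W>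
  proof -
    have "openin X (\<Union>(Union ` \<W>))"
      using that by (intro openin_Union) blast
    moreover have "\<Union>(\<Union>\<W>) = \<Union>(Union ` \<W>)" by blast
    ultimately show ?thesis using that by auto
  qed
  ultimately have istop: "istopology ?open"
    unfolding istopology_def by blast
  show ?thesis
    unfolding orbit_space_topology_def topology_inverse'[OF istop] ..
qed

lemma topspace_orbit_space: "topspace orbit_space = orbits G (topspace X) \<phi>"
proof (rule subset_antisym)
  show "topspace orbit_space \<subseteq> orbits G (topspace X) \<phi>"
    using openin_orbit_space[of "topspace orbit_space"] by simp
  show "orbits G (topspace X) \<phi> \<subseteq> topspace orbit_space"
    by (rule openin_subset) (simp add: openin_orbit_space orbits_coverture)
qed

lemma action_image_eq_preimage:
  assumes g: "g \<in> carrier G" and U: "U \<subseteq> topspace X"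
  shows "\<phi> g ` U = {y \<in> topspace X. \<phi> (inv g) y \<in> U}"
proof (intro equalityI subsetI)
  fix y assume "y \<in> \<phi> g ` U"
  then obtain u where u: "u \<in> U" "\<phi> g u = y" by blast
  then have "\<phi> (inv g) y = u"
    using orbit_sym_aux[OF g] U by blast
  moreover have "y \<in> topspace X"
    using element_image[OF g] u U by blast
  ultimately show "y \<in> {y \<in> topspace X. \<phi> (inv g) y \<in> U}"
    using u by simp
next
  fix y assume y: "y \<in> {y \<in> topspace X. \<phi> (inv g) y \<in> U}"
  have "\<phi> (inv (inv g)) (\<phi> (inv g) y) = y"
    using orbit_sym_aux[OF inv_closed[OF g]] y by blast
  then have "y = \<phi> g (\<phi> (inv g) y)"
    by (simp add: inv_inv[OF g])
  then show "y \<in> \<phi> g ` U"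
    using y by blast
qed

lemma openin_action_image:
  assumes g: "g \<in> carrier G" and U: "openin X U"
  shows "openin X (\<phi> g ` U)"
  unfolding action_image_eq_preimage[OF g openin_subset[OF U]]
  using openin_continuous_map_preimage[OF continuous_map_action[OF inv_closed[OF g]] U] .

lemma Union_orbit_image: "\<Union>(orbit G \<phi> ` U) = (\<Union>g\<in>carrier G. \<phi> g ` U)"
proof (intro equalityI subsetI)
  fix y assume "y \<in> \<Union>(orbit G \<phi> ` U)"
  then obtain u g where "u \<in> U" "g \<in> carrier G" "y = \<phi> g u"
    unfolding orbit_def by blast
  then show "y \<in> (\<Union>g\<in>carrier G. \<phi> g ` U)" by blast
next
  fix y assume "y \<in> (\<Union>g\<in>carrier G. \<phi> g ` U)"
  then obtain u g where "u \<in> U" "g \<in> carrier G" "y = \<phi> g u" by blast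
  then show "y \<in> \<Union>(orbit G \<phi> ` U)"
    unfolding orbit_def by blast
qed

lemma openin_orbit_saturation: "openin X U \<Longrightarrow> openin X (\<Union>(orbit G \<phi> ` U))"
  unfolding Union_orbit_image by (intro openin_Union) (auto intro: openin_action_image)

lemma orbit_preimage:
  assumes "W \<subseteq> orbits G (topspace X) \<phi>"
  shows "{x \<in> topspace X. orbit G \<phi> x \<in> W} = \<Union>W"
proof (intro equalityI subsetI)
  fix x assume "x \<in> {x \<in> topspace X. orbit G \<phi> x \<in> W}"
  then show "x \<in> \<Union>W" using orbit_refl by blast
next
  fix x assume "x \<in> \<Union>W"
  then obtain y where y: "y \<in> topspace X" "orbit G \<phi> y \<in> W" "x \<in> orbit G \<phi> y"
    using assms unfolding orbits_def by blast
  then have "orbit G \<phi> x = orbit G \<phi> y" using orbit_eq by blast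
  then show "x \<in> {x \<in> topspace X. orbit G \<phi> x \<in> W}"
    using y orbit_subset_topspace by auto
qed

lemma continuous_map_orbit: "continuous_map X orbit_space (orbit G \<phi>)"
  unfolding continuous_map_def
proof (intro conjI allI impI)
  show "orbit G \<phi> \<in> topspace X \<rightarrow> topspace orbit_space"
    by (auto simp: topspace_orbit_space orbits_def)
  fix W assume "openin orbit_space W"
  then show "openin X {x \<in> topspace X. orbit G \<phi> x \<in> W}"
    by (simp add: openin_orbit_space orbit_preimage)
qed

lemma open_map_orbit: "open_map X orbit_space (orbit G \<phi>)"
  unfolding open_map_def
proof (intro allI impI)
  fix U assume U: "openin X U"
  then have "orbit G \<phi> ` U \<subseteq> orbits G (topspace X) \<phi>"
    using openin_subset unfolding orbits_def by blast
  then show "openin orbit_space (orbit G \<phi> ` U)"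
    by (simp add: openin_orbit_space openin_orbit_saturation U)
qed

lemma orbit_preimage_invariant:
  assumes U: "U \<subseteq> topspace X" and invariant: "\<And>g x. g \<in> carrier G \<Longrightarrow> x \<in> U \<Longrightarrow> \<phi> g x \<in> U"
  shows "{x \<in> topspace X. orbit G \<phi> x \<in> orbit G \<phi> ` U} = U"
proof -
  have "orbit G \<phi> ` U \<subseteq> orbits G (topspace X) \<phi>"
    using U unfolding orbits_def by blast
  moreover have "\<Union>(orbit G \<phi> ` U) \<subseteq> U"
    unfolding Union_orbit_image using invariant by blast
  moreover have "U \<subseteq> \<Union>(orbit G \<phi> ` U)"
    using U orbit_refl by blast
  ultimately show ?thesis by (simp add: orbit_preimage)
qed

lemma quotient_map_prod_orbit:
  assumes U: "openin X U"
    and invariant: "\<And>g x. g \<in> carrier G \<Longrightarrow> x \<in> U \<Longrightarrow> \<phi> g x \<in> U"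
  shows "quotient_map (prod_topology Z (subtopology X U))
           (prod_topology Z (subtopology orbit_space (orbit G \<phi> ` U))) (\<lambda>(t, x). (t, orbit G \<phi> x))"
proof -
  let ?U' = "subtopology orbit_space (orbit G \<phi> ` U)"
  have UX: "U \<subseteq> topspace X"
    using U by (rule openin_subset)
  have topspace_U': "topspace ?U' = orbit G \<phi> ` U"
    using UX by (auto simp: topspace_orbit_space orbits_def)
  have "continuous_map (subtopology X U) ?U' (orbit G \<phi>)"
    by (intro continuous_map_into_subtopology continuous_map_from_subtopology continuous_map_orbit)
      auto
  then have "continuous_map (prod_topology Z (subtopology X U)) (prod_topology Z ?U')
               (\<lambda>(t, x). (t, orbit G \<phi> x))"
    using continuous_map_prod_top[of Z "subtopology X U" Z ?U' "\<lambda>t. t" "orbit G \<phi>"] by simp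
  \<comment> \<open>Products of quotient maps need not be quotient maps, but products of open maps are open.\<close>
  moreover have "open_map (prod_topology Z (subtopology X U)) (prod_topology Z ?U')
                   (\<lambda>(t, x). (t, orbit G \<phi> x))"
    using open_map_prod_map[OF open_map_id[unfolded id_def]
        open_map_restriction[OF open_map_orbit orbit_preimage_invariant[OF UX invariant]]]
    by simp
  moreover have "(\<lambda>(t, x). (t, orbit G \<phi> x)) ` topspace (prod_topology Z (subtopology X U))
                   = topspace (prod_topology Z ?U')"
    using UX topspace_U' by auto
  ultimately show ?thesis
    by (rule continuous_open_imp_quotient_map)
qed

lemma homotopy_descends_to_orbit_space:
  assumes U: "openin X U"
    and invariant: "\<And>g x. g \<in> carrier G \<Longrightarrow> x \<in> U \<Longrightarrow> \<phi> g x \<in> U"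
    and h: "continuous_map (prod_topology Z (subtopology X U)) X h"
    and equivariant: "\<And>t g x. t \<in> topspace Z \<Longrightarrow> g \<in> carrier G \<Longrightarrow> x \<in> U \<Longrightarrow>
                        h (t, \<phi> g x) = \<phi> g (h (t, x))"
  obtains k where
    "continuous_map (prod_topology Z (subtopology orbit_space (orbit G \<phi> ` U))) orbit_space k"
    "\<And>t x. t \<in> topspace Z \<Longrightarrow> x \<in> U \<Longrightarrow> k (t, orbit G \<phi> x) = orbit G \<phi> (h (t, x))"
proof -
  let ?q = "\<lambda>(t, x). (t, orbit G \<phi> x)"
  let ?U' = "subtopology orbit_space (orbit G \<phi> ` U)"
  have UX: "U \<subseteq> topspace X"
    using U by (rule openin_subset)
  note quotient = quotient_map_prod_orbit[OF U invariant, of Z]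
  have hX: "h (t, x) \<in> topspace X" if "t \<in> topspace Z" "x \<in> U" for t x
    using continuous_map_image_subset_topspace[OF h] that UX by auto
  have same_orbit: "orbit G \<phi> (h (t, y)) = orbit G \<phi> (h (t, x))"
    if t: "t \<in> topspace Z" and x: "x \<in> U" and y: "y \<in> U"
      and xy: "orbit G \<phi> x = orbit G \<phi> y" for t x y
  proof -
    have "y \<in> orbit G \<phi> x"
      using orbit_refl[of y] y UX xy by auto
    then obtain g where "g \<in> carrier G" "y = \<phi> g x"
      unfolding orbit_def by blast
    then have "h (t, y) \<in> orbit G \<phi> (h (t, x))"
      using equivariant[OF t _ x] unfolding orbit_def by blast
    then show ?thesis
      using orbit_eq hX[OF t x] by blast
  qed
  have "(orbit G \<phi> \<circ> h) p = (orbit G \<phi> \<circ> h) p'"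
    if "p \<in> topspace (prod_topology Z (subtopology X U))"
      and "p' \<in> topspace (prod_topology Z (subtopology X U))" and "?q p = ?q p'" for p p'
    using that same_orbit by (auto simp: UX Int_absorb2)
  then obtain k where k: "continuous_map (prod_topology Z ?U') orbit_space k"
    and k_q: "\<And>p. p \<in> topspace (prod_topology Z (subtopology X U)) \<Longrightarrow> k (?q p) = orbit G \<phi> (h p)"
    using quotient_map_lift_exists[OF quotient continuous_map_compose[OF h continuous_map_orbit]]
    by (metis comp_apply)
  show ?thesis
  proof (rule that[OF k])
    fix t x assume "t \<in> topspace Z" "x \<in> U"
    then show "k (t, orbit G \<phi> x) = orbit G \<phi> (h (t, x))"
      using k_q[of "(t, x)"] UX by auto
  qed
qed

end

locale subgroup_topological_action = topological_action G X \<phi>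
  for G :: "('g, 'b) monoid_scheme" (structure) and X :: "'x topology" and \<phi> +
  fixes K :: "'g set"
  assumes subgroup: "subgroup K G"
begin

sublocale K: topological_action "G\<lparr>carrier := K\<rparr>" X \<phi>
proof (intro topological_action.intro topological_action_axioms.intro)
  show "group_action (G\<lparr>carrier := K\<rparr>) (topspace X) \<phi>"
    by (rule subgroup_action[OF subgroup])
  show "continuous_map X X (\<phi> k)" if "k \<in> carrier (G\<lparr>carrier := K\<rparr>)" for k
    using that subgroup.subset[OF subgroup] continuous_map_action by auto
qed

abbreviation K_orbit :: "'x \<Rightarrow> 'x set" where
  "K_orbit \<equiv> orbit (G\<lparr>carrier := K\<rparr>) \<phi>"

abbreviation fixed_orbits :: "'x set set" where
  "fixed_orbits \<equiv> quotient_fixed_points G K X \<phi>"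

lemma fixed_orbits_subset: "fixed_orbits \<subseteq> orbits (G\<lparr>carrier := K\<rparr>) (topspace X) \<phi>"
  unfolding quotient_fixed_points_def by blast

lemma fixed_orbit_invariant:
  assumes Q: "Q \<in> fixed_orbits" and x: "x \<in> Q" and g: "g \<in> carrier G"
  shows "\<phi> g x \<in> Q"
proof -
  obtain y where y: "y \<in> topspace X" "Q = K_orbit y"
    using Q fixed_orbits_subset unfolding orbits_def by blast
  then have "\<phi> g x \<in> topspace X"
    using x g element_image K.orbit_subset_topspace by blast
  moreover have "K_orbit (\<phi> g x) = Q"
    using Q x g unfolding quotient_fixed_points_def by blast
  ultimately show ?thesis
    using K.orbit_refl by blast
qed

lemma K_orbit_in_fixed_orbits:
  assumes x: "x \<in> topspace X" and fixed: "\<And>g. g \<in> carrier G \<Longrightarrow> \<phi> g x \<in> K_orbit x"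
  shows "K_orbit x \<in> fixed_orbits"
  unfolding quotient_fixed_points_def
proof (intro CollectI conjI ballI)
  show "K_orbit x \<in> orbits (G\<lparr>carrier := K\<rparr>) (topspace X) \<phi>"
    using x unfolding orbits_def by blast
  fix g w assume g: "g \<in> carrier G" and w: "w \<in> K_orbit x"
  then obtain k where k: "k \<in> K" "w = \<phi> k x"
    unfolding orbit_def by auto
  have kG: "k \<in> carrier G"
    using k(1) subgroup.subset[OF subgroup] by blast
  have "\<phi> g w = \<phi> (g \<otimes> k) x"
    using composition_rule[OF x g kG] k(2) by simp
  then have "\<phi> g w \<in> K_orbit x"
    using fixed[OF m_closed[OF g kG]] by simp
  then show "K_orbit (\<phi> g w) = K_orbit x"
    using K.orbit_eq[OF x] by blast
qed

lemma topspace_fixed_point_space: "topspace (fixed_point_space G K X \<phi>) = fixed_orbits"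
  using fixed_orbits_subset by (auto simp: fixed_point_space_def K.topspace_orbit_space)

lemma K_orbit_eq_of_fixed:
  assumes fixed: "K_orbit y \<in> fixed_orbits" and z: "z \<in> topspace X" and y: "y \<in> orbit G \<phi> z"
  shows "K_orbit y = K_orbit z"
proof -
  obtain g where g: "g \<in> carrier G" "\<phi> g z = y"
    using y unfolding orbit_def by auto
  then have "y \<in> topspace X" "\<phi> (inv g) y = z"
    using z element_image orbit_sym_aux by blast+
  then have "z \<in> K_orbit y"
    using fixed_orbit_invariant[OF fixed K.orbit_refl] g by auto
  then show ?thesis
    using K.orbit_eq \<open>y \<in> topspace X\<close> by blast
qed

lemma equivariant_homotopy_preserves_fixed_orbits:
  assumes h: "continuous_map (prod_topology Z (subtopology X U)) X h"
    and equivariant: "\<And>g x. g \<in> carrier G \<Longrightarrow> x \<in> U \<Longrightarrow> h (t, \<phi> g x) = \<phi> g (h (t, x))"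
    and UX: "U \<subseteq> topspace X" and t: "t \<in> topspace Z" and x: "x \<in> U"
    and fixed: "K_orbit x \<in> fixed_orbits"
  shows "K_orbit (h (t, x)) \<in> fixed_orbits"
proof (rule K_orbit_in_fixed_orbits)
  have "(t, x) \<in> topspace (prod_topology Z (subtopology X U))"
    using t x UX by auto
  then show "h (t, x) \<in> topspace X"
    using continuous_map_image_subset_topspace[OF h] by blast
  fix g assume g: "g \<in> carrier G"
  have "\<phi> g x \<in> K_orbit x"
    using fixed_orbit_invariant[OF fixed K.orbit_refl g] x UX by blast
  then obtain k where k: "k \<in> K" "\<phi> g x = \<phi> k x"
    unfolding orbit_def by auto
  then have "k \<in> carrier G"
    using subgroup.subset[OF subgroup] by blast
  then have "\<phi> g (h (t, x)) = \<phi> k (h (t, x))"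
    using equivariant[OF g x] equivariant[of k x] k x by simp
  then show "\<phi> g (h (t, x)) \<in> K_orbit (h (t, x))"
    using k(1) unfolding orbit_def by auto
qed

lemma openin_fixed_point_space_orbit_image:
  assumes "openin X U"
  shows "openin (fixed_point_space G K X \<phi>) (K_orbit ` U \<inter> fixed_orbits)"
proof -
  have "openin K.orbit_space (K_orbit ` U)"
    using K.open_map_orbit assms unfolding open_map_def by blast
  then show ?thesis
    unfolding fixed_point_space_def by (rule openin_subtopology_Int)
qed

lemma equivariant_homotopy_descends_to_fixed_point_space:
  assumes U: "openin X U"
    and invariant: "\<And>g x. g \<in> carrier G \<Longrightarrow> x \<in> U \<Longrightarrow> \<phi> g x \<in> U"
    and h: "continuous_map (prod_topology Z (subtopology X U)) X h"
    and equivariant: "\<And>t g x. t \<in> topspace Z \<Longrightarrow> g \<in> carrier G \<Longrightarrow> x \<in> U \<Longrightarrow>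
                        h (t, \<phi> g x) = \<phi> g (h (t, x))"
  obtains k where
    "continuous_map (prod_topology Z (subtopology (fixed_point_space G K X \<phi>)
        (K_orbit ` U \<inter> fixed_orbits))) (fixed_point_space G K X \<phi>) k"
    "\<And>t x. t \<in> topspace Z \<Longrightarrow> x \<in> U \<Longrightarrow> k (t, K_orbit x) = K_orbit (h (t, x))"
proof -
  let ?V = "K_orbit ` U \<inter> fixed_orbits"
  let ?Y = "fixed_point_space G K X \<phi>"
  have UX: "U \<subseteq> topspace X"
    using U by (rule openin_subset)
  have KG: "carrier (G\<lparr>carrier := K\<rparr>) \<subseteq> carrier G"
    using subgroup.subset[OF subgroup] by simp
  have K_invariant: "\<phi> g x \<in> U" if "g \<in> carrier (G\<lparr>carrier := K\<rparr>)" "x \<in> U" for g x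
    using invariant KG that by blast
  have K_equivariant: "h (t, \<phi> g x) = \<phi> g (h (t, x))"
    if "t \<in> topspace Z" "g \<in> carrier (G\<lparr>carrier := K\<rparr>)" "x \<in> U" for t g x
    using equivariant KG that by auto
  obtain k where k: "continuous_map (prod_topology Z (subtopology K.orbit_space (K_orbit ` U)))
                       K.orbit_space k"
    and k_orbit: "\<And>t x. t \<in> topspace Z \<Longrightarrow> x \<in> U \<Longrightarrow> k (t, K_orbit x) = K_orbit (h (t, x))"
    using K.homotopy_descends_to_orbit_space[OF U K_invariant h K_equivariant] by blast
  have k_fixed: "k (t, Q) \<in> fixed_orbits" if t: "t \<in> topspace Z" and Q: "Q \<in> ?V" for t Q
  proof -
    obtain x where x: "x \<in> U" "Q = K_orbit x"
      using Q by blast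
    then show ?thesis
      using k_orbit[OF t x(1)] equivariant_homotopy_preserves_fixed_orbits[OF h _ UX t x(1)]
        equivariant t Q by auto
  qed
  have "subtopology ?Y ?V = subtopology (subtopology K.orbit_space (K_orbit ` U)) ?V"
    unfolding fixed_point_space_def subtopology_subtopology by (metis Int_commute Int_left_absorb)
  then have "prod_topology Z (subtopology ?Y ?V)
      = subtopology (prod_topology Z (subtopology K.orbit_space (K_orbit ` U))) (topspace Z \<times> ?V)"
    by (simp add: prod_topology_subtopology)
  then have "continuous_map (prod_topology Z (subtopology ?Y ?V)) ?Y k"
    unfolding fixed_point_space_def
    using continuous_map_from_subtopology[OF k] k_fixed
    by (auto intro!: continuous_map_into_subtopology)
  then show ?thesis
    using that k_orbit by blast
qed

lemma fixed_point_space_homotopic_to_const: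
  assumes U: "openin X U"
    and invariant: "\<And>g x. g \<in> carrier G \<Longrightarrow> x \<in> U \<Longrightarrow> \<phi> g x \<in> U"
    and hom: "homotopic_with (\<lambda>f. \<forall>g\<in>carrier G. \<forall>x\<in>U. f (\<phi> g x) = \<phi> g (f x))
                (subtopology X U) X id c"
    and z: "z \<in> topspace X" and c: "c ` U \<subseteq> orbit G \<phi> z"
  shows "homotopic_with (\<lambda>_. True)
           (subtopology (fixed_point_space G K X \<phi>) (K_orbit ` U \<inter> fixed_orbits))
           (fixed_point_space G K X \<phi>) id (\<lambda>_. K_orbit z)"
proof -
  let ?I = "top_of_set {0..1::real}"
  let ?V = "K_orbit ` U \<inter> fixed_orbits"
  let ?Y = "fixed_point_space G K X \<phi>"
  obtain h where h: "continuous_map (prod_topology ?I (subtopology X U)) X h"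
    and h0: "\<And>x. h (0, x) = x" and h1: "\<And>x. h (1, x) = c x"
    and equivariant: "\<And>t g x. t \<in> {0..1} \<Longrightarrow> g \<in> carrier G \<Longrightarrow> x \<in> U \<Longrightarrow>
                        h (t, \<phi> g x) = \<phi> g (h (t, x))"
    using hom unfolding homotopic_with_def by auto
  have equivariant_I: "\<And>t g x. t \<in> topspace ?I \<Longrightarrow> g \<in> carrier G \<Longrightarrow> x \<in> U \<Longrightarrow>
                        h (t, \<phi> g x) = \<phi> g (h (t, x))"
    using equivariant by simp
  obtain k where k: "continuous_map (prod_topology ?I (subtopology ?Y ?V)) ?Y k"
    and k_orbit: "\<And>t x. t \<in> topspace ?I \<Longrightarrow> x \<in> U \<Longrightarrow> k (t, K_orbit x) = K_orbit (h (t, x))"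
    using equivariant_homotopy_descends_to_fixed_point_space[OF U invariant h equivariant_I]
    by blast
  have "k (0, Q) = id Q" and "k (1, Q) = K_orbit z"
    if Q: "Q \<in> topspace (subtopology ?Y ?V)" for Q
  proof -
    obtain x where x: "x \<in> U" "Q = K_orbit x"
      using Q by auto
    then show "k (0, Q) = id Q"
      using k_orbit h0 by simp
    have "K_orbit (c x) \<in> topspace ?Y"
      using continuous_map_image_subset_topspace[OF k] k_orbit[of 1 x] h1 x Q by force
    then show "k (1, Q) = K_orbit z"
      using K_orbit_eq_of_fixed z c x k_orbit h1 by (auto simp: topspace_fixed_point_space)
  qed
  then show ?thesis
    using k by (subst homotopic_with) auto
qed

lemma LS_cat_fixed_point_space_le_equivariant_cat:
  "LS_cat (fixed_point_space G K X \<phi>) \<le> equivariant_cat G X \<phi>"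
  unfolding LS_cat_def equivariant_cat_def
proof (rule Inf_superset_mono, clarify)
  fix n and U :: "nat \<Rightarrow> 'x set"
  assume categorical: "\<forall>i<n. openin X (U i) \<and> (\<forall>g\<in>carrier G. \<forall>x\<in>U i. \<phi> g x \<in> U i) \<and>
         (\<exists>c. homotopic_with (\<lambda>h. \<forall>g\<in>carrier G. \<forall>x\<in>U i. h (\<phi> g x) = \<phi> g (h x))
                 (subtopology X (U i)) X id c \<and> (\<exists>z\<in>topspace X. c ` U i \<subseteq> orbit G \<phi> z))"
    and cover: "topspace X \<subseteq> (\<Union>i<n. U i)"
  define V where "V i = K_orbit ` U i \<inter> fixed_orbits" for i
  have piece: "openin (fixed_point_space G K X \<phi>) (V i) \<and>
        (\<exists>Q. homotopic_with (\<lambda>_. True) (subtopology (fixed_point_space G K X \<phi>) (V i))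
               (fixed_point_space G K X \<phi>) id (\<lambda>_. Q))" if i: "i < n" for i
  proof -
    note U_i = categorical[rule_format, OF i]
    have U: "openin X (U i)"
      using U_i by (rule conjunct1)
    have invariant: "\<phi> g x \<in> U i" if "g \<in> carrier G" "x \<in> U i" for g x
      using U_i that by blast
    obtain c where hom: "homotopic_with (\<lambda>h. \<forall>g\<in>carrier G. \<forall>x\<in>U i. h (\<phi> g x) = \<phi> g (h x))
                  (subtopology X (U i)) X id c"
      and orbit_target: "\<exists>z\<in>topspace X. c ` U i \<subseteq> orbit G \<phi> z"
      using conjunct2[OF conjunct2[OF U_i]] by blast
    from orbit_target obtain z where z: "z \<in> topspace X" and c: "c ` U i \<subseteq> orbit G \<phi> z" ..
    show ?thesis
      unfolding V_def
      using openin_fixed_point_space_orbit_image[OF U]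
        fixed_point_space_homotopic_to_const[OF U invariant hom z c]
      by (intro conjI exI) assumption+
  qed
  have cover_fixed: "topspace (fixed_point_space G K X \<phi>) \<subseteq> (\<Union>i<n. V i)"
  proof
    fix Q assume "Q \<in> topspace (fixed_point_space G K X \<phi>)"
    then have Q: "Q \<in> fixed_orbits"
      by (simp add: topspace_fixed_point_space)
    then obtain x where x: "x \<in> topspace X" "Q = K_orbit x"
      using fixed_orbits_subset unfolding orbits_def by blast
    then obtain i where i: "i < n" "x \<in> U i"
      using cover by blast
    then have "Q \<in> V i"
      unfolding V_def using Q x by blast
    then show "Q \<in> (\<Union>i<n. V i)"
      using i by blast
  qed
  show "\<exists>m. enat n = enat m \<and>
      (\<exists>V. (\<forall>i<m. openin (fixed_point_space G K X \<phi>) (V i) \<and>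
        (\<exists>Q. homotopic_with (\<lambda>_. True) (subtopology (fixed_point_space G K X \<phi>) (V i))
               (fixed_point_space G K X \<phi>) id (\<lambda>_. Q))) \<and>
        topspace (fixed_point_space G K X \<phi>) \<subseteq> (\<Union>i<m. V i))"
    using piece cover_fixed by (intro exI[of _ n] exI[of _ V] conjI refl allI impI) blast+
qed

end

lemma continuous_action_imp_topological_action:
  assumes "continuous_action G TG X \<phi>"
  shows "topological_action G X \<phi>"
proof (intro topological_action.intro topological_action_axioms.intro)
  have TG: "topspace TG = carrier G"
    and action: "continuous_map (prod_topology TG X) X (\<lambda>(g, x). \<phi> g x)"
    using assms unfolding continuous_action_def topological_group_def by auto
  show "group_action G (topspace X) \<phi>"
    using assms unfolding continuous_action_def by blast
  fix g assume "g \<in> carrier G"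
  then have "continuous_map X (prod_topology TG X) (\<lambda>x. (g, x))"
    by (intro continuous_map_pairedI) (auto simp: TG)
  then have "continuous_map X X ((\<lambda>(g, x). \<phi> g x) \<circ> (\<lambda>x. (g, x)))"
    using action by (rule continuous_map_compose)
  then show "continuous_map X X (\<phi> g)"
    by (simp add: o_def)
qed

theorem mainTheorem9:
  fixes G :: "('g, 'b) monoid_scheme" and TG :: "'g topology"
    and X :: "'x topology" and \<phi> :: "'g \<Rightarrow> 'x \<Rightarrow> 'x"
  assumes "compact_Lie_group G TG"
    and "continuous_action G TG X \<phi>"
    and "metrizable_space X"
  shows "\<forall>K. K \<lhd> G \<and> closedin TG K \<longrightarrow>
           LS_cat (fixed_point_space G K X \<phi>) \<le> equivariant_cat G X \<phi>"
proof (intro allI impI)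
  fix K assume "K \<lhd> G \<and> closedin TG K"
  then have "subgroup K G"
    using normal_imp_subgroup by blast
  then interpret subgroup_topological_action G X \<phi> K
    using continuous_action_imp_topological_action[OF assms(2)]
    by (intro subgroup_topological_action.intro subgroup_topological_action_axioms.intro)
  show "LS_cat (fixed_point_space G K X \<phi>) \<le> equivariant_cat G X \<phi>"
    by (rule LS_cat_fixed_point_space_le_equivariant_cat)
qed

end
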